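(* Let $M>0$ and $p,K\in\mathbb{N}$. Let $\boldsymbol\Phi(p,K)$ denote the set of all continuous maps from $\mathbb{R}^p$ to $\mathbb{R}^K$. Then \[ \inf_{\boldsymbol \phi \in \boldsymbol \Phi(p,K)} \frac{1}{(2M)^{2p}} \int_{[-M,M]^{p}} \int_{[-M,M]^{p}} \Big| -\|\boldsymbol x-\boldsymbol x'\|_2^2 - \langle \boldsymbol \phi(\boldsymbol x),\boldsymbol \phi(\boldsymbol x') \rangle \Big| \,\mathrm{d} \boldsymbol x\, \mathrm{d} \boldsymbol x' \geq \frac{2pM^2}{3}. \]
   Context: $\langle\cdot,\cdot\rangle$ denotes the standard Euclidean inner product on $\mathbb{R}^K$ and $\|\cdot\|_2$ the Euclidean norm on $\mathbb{R}^p$. *)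

theory Defs
  imports "HOL-Analysis.Analysis"
begin

definition cube :: "real \<Rightarrow> (real ^ 'p) set" where
  "cube M = {x. \<forall>i. x $ i \<in> {-M..M}}"

end

theory Submission
  imports Defs
begin

(* Since |t| >= -t, the integrand dominates |x - x'|^2 + <\<phi> x, \<phi> x'>. Integrating this
   over S \<times> S with S = [-M,M]^p, the cross term -2 <x, x'> vanishes because S is symmetric,
   and the \<phi>-term becomes |\<integral>\<^sub>S \<phi>|^2 >= 0, leaving 2 |S| \<integral>\<^sub>S |x|^2 = 2 p (2M)^(2p) M^2 / 3. *)

lemmas set_borel_integrable_compact = borel_integrable_compact[folded set_integrable_def]

lemma set_integral_inner_left:
  fixes f :: "'a \<Rightarrow> 'b::euclidean_space"
  assumes "set_integrable M S f"
  shows "(LINT x:S|M. f x \<bullet> c) = (LINT x:S|M. f x) \<bullet> c"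
  using assms unfolding set_lebesgue_integral_def set_integrable_def
  by (subst integral_inner_left[symmetric]) (auto intro!: Bochner_Integration.integral_cong)

lemma set_integral_inner_right:
  fixes f :: "'a \<Rightarrow> 'b::euclidean_space"
  assumes "set_integrable M S f"
  shows "(LINT x:S|M. c \<bullet> f x) = c \<bullet> (LINT x:S|M. f x)"
  using assms unfolding set_lebesgue_integral_def set_integrable_def
  by (subst integral_inner_right[symmetric]) (auto intro!: Bochner_Integration.integral_cong)

lemma set_integrable_partial_integral_compact:
  fixes F :: "'a::euclidean_space \<times> 'b::euclidean_space \<Rightarrow> real"
  assumes "compact S" "compact T" "continuous_on (S \<times> T) F"
  shows "set_integrable lborel S (\<lambda>x. LINT y:T|lborel. F (x, y))"
proof -
  have "integrable (lborel \<Otimes>\<^sub>M lborel) (\<lambda>z. indicator (S \<times> T) z *\<^sub>R F z)"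
    unfolding lborel_prod using assms by (intro borel_integrable_compact compact_Times)
  from lborel_pair.integrable_fst'[OF this]
  have "integrable lborel (\<lambda>x. \<integral>y. indicator (S \<times> T) (x, y) *\<^sub>R F (x, y) \<partial>lborel)"
    by simp
  moreover have "(\<integral>y. indicator (S \<times> T) (x, y) *\<^sub>R F (x, y) \<partial>lborel)
      = indicator S x *\<^sub>R (LINT y:T|lborel. F (x, y))" for x
    unfolding set_lebesgue_integral_def by (cases "x \<in> S") (auto simp: indicator_def)
  ultimately show ?thesis
    unfolding set_integrable_def by simp
qed

lemma set_integral_id_symmetric_eq_0:
  fixes S :: "'a::euclidean_space set"
  assumes [measurable]: "S \<in> sets borel" and symmetric: "\<And>x. x \<in> S \<Longrightarrow> - x \<in> S"
  shows "(LINT x:S|lborel. x) = 0"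
proof -
  have lborel_reflect: "distr lborel borel uminus = (lborel :: 'a measure)"
    using lborel_affine[of "-1" "0 :: 'a"] by (simp add: density_1)
  have indicator_reflect: "indicator S (- x) = (indicator S x :: real)" for x
    using symmetric[of x] symmetric[of "- x"] by (auto simp: indicator_def)
  have "(LINT x:S|lborel. x) = (\<integral>x. indicator S (- x) *\<^sub>R (- x) \<partial>lborel)"
    unfolding set_lebesgue_integral_def
    by (subst (1) lborel_reflect[symmetric], subst integral_distr) (auto simp: indicator_reflect)
  also have "\<dots> = - (LINT x:S|lborel. x)"
    unfolding set_lebesgue_integral_def by (simp add: indicator_reflect integral_minus)
  finally have "(2::real) *\<^sub>R (LINT x:S|lborel. x) = 0"
    by (simp add: scaleR_2 eq_neg_iff_add_eq_0)
  then show ?thesis by simp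
qed

lemma double_integral_abs_sqdist_inner_ge:
  fixes S :: "'a::euclidean_space set" and \<phi> :: "'a \<Rightarrow> 'b::euclidean_space"
  assumes S: "compact S" and \<phi>: "continuous_on S \<phi>" and centroid: "(LINT x:S|lborel. x) = 0"
  shows "2 * measure lborel S * (LINT x:S|lborel. (norm x)\<^sup>2)
    \<le> (LINT x':S|lborel. LINT x:S|lborel. \<bar>- (norm (x - x'))\<^sup>2 - \<phi> x \<bullet> \<phi> x'\<bar>)"
proof -
  define V where "V = measure lborel S"
  define A where "A = (LINT x:S|lborel. (norm x)\<^sup>2)"
  define \<Phi> where "\<Phi> = (LINT x:S|lborel. \<phi> x)"
  note integrable = set_borel_integrable_compact[OF S]
  have const: "(LINT x:S|lborel. c) = V * c" for c :: real
    using set_integral_const[of S lborel c] S emeasure_compact_finite[OF S]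
    by (simp add: borel_compact V_def)
  have inner_bound: "A + V * (norm x')\<^sup>2 + \<Phi> \<bullet> \<phi> x'
      \<le> (LINT x:S|lborel. \<bar>- (norm (x - x'))\<^sup>2 - \<phi> x \<bullet> \<phi> x'\<bar>)" for x'
  proof -
    have sqdist: "(norm (x - x'))\<^sup>2 = (norm x)\<^sup>2 - 2 * (x \<bullet> x') + (norm x')\<^sup>2" for x
      by (simp add: power2_norm_eq_inner inner_diff_left inner_diff_right inner_commute)
    have "(LINT x:S|lborel. (norm x)\<^sup>2 - 2 * (x \<bullet> x') + (norm x')\<^sup>2 + \<phi> x \<bullet> \<phi> x')
        = A - 2 * ((LINT x:S|lborel. x) \<bullet> x') + V * (norm x')\<^sup>2 + \<Phi> \<bullet> \<phi> x'"
      unfolding A_def \<Phi>_def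
      by (simp add: integrable continuous_intros \<phi> set_integral_inner_left const)
    also have "\<dots> = A + V * (norm x')\<^sup>2 + \<Phi> \<bullet> \<phi> x'"
      by (simp add: centroid)
    finally have "A + V * (norm x')\<^sup>2 + \<Phi> \<bullet> \<phi> x'
        = (LINT x:S|lborel. (norm (x - x'))\<^sup>2 + \<phi> x \<bullet> \<phi> x')"
      by (simp add: sqdist)
    also have "\<dots> \<le> (LINT x:S|lborel. \<bar>- (norm (x - x'))\<^sup>2 - \<phi> x \<bullet> \<phi> x'\<bar>)"
      by (intro set_integral_mono integrable continuous_intros \<phi>) auto
    finally show ?thesis .
  qed
  have "2 * V * A + \<Phi> \<bullet> \<Phi> = (LINT x':S|lborel. A + V * (norm x')\<^sup>2 + \<Phi> \<bullet> \<phi> x')"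
    unfolding A_def \<Phi>_def
    by (simp add: integrable continuous_intros \<phi> set_integral_inner_right const)
  also have "\<dots> \<le> (LINT x':S|lborel. LINT x:S|lborel. \<bar>- (norm (x - x'))\<^sup>2 - \<phi> x \<bullet> \<phi> x'\<bar>)"
  proof (rule set_integral_mono[OF _ _ inner_bound])
    show "set_integrable lborel S (\<lambda>x'. A + V * (norm x')\<^sup>2 + \<Phi> \<bullet> \<phi> x')"
      by (intro integrable continuous_intros \<phi>)
    have "continuous_on (S \<times> S) (\<lambda>z. \<phi> (fst z))"
      and "continuous_on (S \<times> S) (\<lambda>z. \<phi> (snd z))"
      by (auto intro!: continuous_on_compose2[OF \<phi>] continuous_intros)
    then have "continuous_on (S \<times> S)
        (\<lambda>z. \<bar>- (norm (snd z - fst z))\<^sup>2 - \<phi> (snd z) \<bullet> \<phi> (fst z)\<bar>)"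
      by (intro continuous_intros)
    from set_integrable_partial_integral_compact[OF S S this]
    show "set_integrable lborel S (\<lambda>x'. LINT x:S|lborel. \<bar>- (norm (x - x'))\<^sup>2 - \<phi> x \<bullet> \<phi> x'\<bar>)"
      by simp
  qed
  finally show ?thesis
    using inner_ge_zero[of \<Phi>] unfolding V_def A_def by linarith
qed

lemma cube_eq_cbox: "cube M = cbox (\<chi> i. - M) (\<chi> i. M :: real ^ 'p)"
  by (auto simp: cube_def mem_box_cart)

lemma compact_cube: "compact (cube M)"
  unfolding cube_eq_cbox by simp

lemma measure_cube:
  assumes "0 \<le> M"
  shows "measure lborel (cube M :: (real ^ 'p) set) = (2 * M) ^ CARD('p)"
proof -
  have "(\<chi> i. M) \<in> cbox (\<chi> i. - M) (\<chi> i. M :: real ^ 'p)"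
    using assms by (simp add: mem_box_cart)
  then show ?thesis
    unfolding cube_eq_cbox by (subst content_cbox_cart) auto
qed

lemma set_integral_cube_id: "(LINT x:cube M|lborel. x) = (0 :: real ^ 'p)"
  by (rule set_integral_id_symmetric_eq_0)
    (auto simp: borel_compact compact_cube cube_def minus_le_iff le_minus_iff)

lemma nn_integral_lborel_prod_cart:
  fixes f :: "'n::finite \<Rightarrow> real \<Rightarrow> ennreal"
  assumes "\<And>j. f j \<in> borel_measurable borel"
  shows "(\<integral>\<^sup>+x. (\<Prod>j\<in>UNIV. f j (x $ j)) \<partial>lborel) = (\<Prod>j\<in>UNIV. \<integral>\<^sup>+t. f j t \<partial>lborel)"
proof -
  let ?e = "\<lambda>j::'n. axis j (1::real)"
  have inj: "inj ?e"
    by (auto intro!: injI simp: axis_eq_axis)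
  have Basis: "Basis = range ?e"
    by (auto simp: Basis_vec_def)
  define g where "g b = f (inv ?e b)" for b
  have g_axis: "g (?e j) = f j" for j
    unfolding g_def by (simp add: inv_f_f[OF inj])
  have "(\<integral>\<^sup>+x. (\<Prod>b\<in>Basis. g b (x \<bullet> b)) \<partial>lborel) = (\<Prod>b\<in>Basis. \<integral>\<^sup>+t. g b t \<partial>lborel)"
    by (rule nn_integral_lborel_prod) (auto simp: g_def assms)
  then show ?thesis
    unfolding Basis prod.reindex[OF inj] by (simp add: g_axis inner_axis)
qed

lemma set_integral_cube_coordinate_sq:
  fixes i :: "'p::finite"
  assumes "0 \<le> M"
  shows "(LINT x:cube M|lborel. (x $ i)\<^sup>2) = (2 * M) ^ CARD('p) * M\<^sup>2 / 3"
proof -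
  have integrable: "set_integrable lborel (cube M) (\<lambda>x :: real ^ 'p. (x $ i)\<^sup>2)"
    by (intro set_borel_integrable_compact compact_cube continuous_intros)
  define f where "f j t = ennreal (if j = i then t\<^sup>2 else 1) * indicator {- M..M} t" for j t
  have "(\<integral>\<^sup>+t. f i t \<partial>lborel) = ennreal (M ^ 3 / 3 - (- M) ^ 3 / 3)"
    unfolding f_def if_P[OF refl] using assms
    by (intro nn_integral_FTC_Icc) (auto intro!: derivative_eq_intros)
  then have integral_f:
    "(\<integral>\<^sup>+t. f j t \<partial>lborel) = ennreal (2 * M * (if j = i then M\<^sup>2 / 3 else 1))" for j
    using assms by (cases "j = i") (auto simp: f_def power3_eq_cube power2_eq_square field_simps)
  have "(\<integral>\<^sup>+x. ennreal (indicator (cube M) x * (x $ i)\<^sup>2) \<partial>lborel)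
      = (\<integral>\<^sup>+x. (\<Prod>j\<in>UNIV. f j (x $ j)) \<partial>lborel)"
    by (intro nn_integral_cong) (auto simp: f_def cube_def prod.distrib indicator_def prod_ennreal)
  also have "\<dots> = (\<Prod>j\<in>UNIV. \<integral>\<^sup>+t. f j t \<partial>lborel)"
    by (rule nn_integral_lborel_prod_cart) (simp add: f_def)
  also have "\<dots> = ennreal ((2 * M) ^ CARD('p) * M\<^sup>2 / 3)"
    using assms by (simp add: integral_f prod_ennreal prod.distrib prod.delta)
  finally have "ennreal (LINT x:cube M|lborel. (x $ i)\<^sup>2) = ennreal ((2 * M) ^ CARD('p) * M\<^sup>2 / 3)"
    using integrable unfolding set_lebesgue_integral_def set_integrable_def
    by (subst nn_integral_eq_integral[symmetric]) auto
  then show ?thesis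
    using assms
    by (subst (asm) ennreal_inj) (auto simp: set_lebesgue_integral_def intro!: integral_nonneg_AE)
qed

lemma set_integral_cube_norm_sq:
  assumes "0 \<le> M"
  shows "(LINT x:cube M|lborel. (norm (x :: real ^ 'p))\<^sup>2)
    = real CARD('p) * ((2 * M) ^ CARD('p) * M\<^sup>2 / 3)"
proof -
  have norm_sq: "(norm x)\<^sup>2 = (\<Sum>i\<in>UNIV. (x $ i)\<^sup>2)" for x :: "real ^ 'p"
    by (simp add: norm_vec_def L2_set_def sum_nonneg)
  have "(LINT x:cube M|lborel. (norm (x :: real ^ 'p))\<^sup>2)
      = (\<Sum>i\<in>UNIV. LINT x:cube M|lborel. ((x :: real ^ 'p) $ i)\<^sup>2)"
    unfolding set_lebesgue_integral_def norm_sq scaleR_sum_right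
    by (rule Bochner_Integration.integral_sum)
      (intro set_borel_integrable_compact[unfolded set_integrable_def] compact_cube continuous_intros)
  then show ?thesis
    by (simp add: set_integral_cube_coordinate_sq[OF assms])
qed

theorem proposition4p1:
  fixes M :: real
  assumes "M > 0"
  shows "(INF \<phi> \<in> {\<phi> :: real ^ 'p \<Rightarrow> real ^ 'k. continuous_on UNIV \<phi>}.
            1 / (2 * M) ^ (2 * CARD('p)) *
            (LINT x' : cube M | lborel. (LINT x : cube M | lborel.
               \<bar>- (norm (x - x'))\<^sup>2 - inner (\<phi> x) (\<phi> x')\<bar>)))
         \<ge> 2 * real CARD('p) * M\<^sup>2 / 3"
proof (rule cINF_greatest)
  show "{\<phi> :: real ^ 'p \<Rightarrow> real ^ 'k. continuous_on UNIV \<phi>} \<noteq> {}"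
    using continuous_on_const by blast
next
  fix \<phi> :: "real ^ 'p \<Rightarrow> real ^ 'k"
  assume "\<phi> \<in> {\<phi>. continuous_on UNIV \<phi>}"
  then have "continuous_on (cube M) \<phi>"
    by (auto intro: continuous_on_subset)
  from double_integral_abs_sqdist_inner_ge[OF compact_cube this set_integral_cube_id]
  have "2 * (2 * M) ^ CARD('p) * (real CARD('p) * ((2 * M) ^ CARD('p) * M\<^sup>2 / 3))
      \<le> (LINT x':cube M|lborel. LINT x:cube M|lborel. \<bar>- (norm (x - x'))\<^sup>2 - \<phi> x \<bullet> \<phi> x'\<bar>)"
    using assms by (simp add: measure_cube set_integral_cube_norm_sq less_imp_le)
  moreover have "(2 * M) ^ (2 * CARD('p)) = ((2 * M) ^ CARD('p))\<^sup>2"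
    by (simp add: power_mult mult.commute)
  ultimately show "2 * real CARD('p) * M\<^sup>2 / 3 \<le> 1 / (2 * M) ^ (2 * CARD('p)) *
      (LINT x':cube M|lborel. LINT x:cube M|lborel. \<bar>- (norm (x - x'))\<^sup>2 - \<phi> x \<bullet> \<phi> x'\<bar>)"
    using assms by (simp add: field_simps power2_eq_square)
qed

end
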